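(* There exist $\alpha_0>0$ and a function $C_2(\alpha)$, polylogarithmic in $1/\alpha$, such that for every $0<\alpha\le\alpha_0$ the following holds. Let $G=(V,E)$ be a graph, $\mathcal T$ a hierarchy of $G$, $h>0$, $X\in\{0,1\}^{h\times V}$ and $U\in\mathbb R^{E\times h}$ semiorthogonal. If a non-root node $t$ is $\alpha$-bad, then there is a $2$-homogeneous set $\mathcal O'(t)\subseteq\mathcal O(t)$ that is $1/C_2(\alpha)$-dominating.
   Context: Graphs are finite, undirected, unweighted, loopless, possibly with parallel edges; each edge $e=\{u,v\}$ has a fixed orientation $u\to v$. $U\in\mathbb R^{E\times h}$ is semiorthogonal if $UU^\intercal=I$; $U^e$ is its row indexed by $e$. $X_v$ is the column of $X$ indexed by $v$, and $X_e=X_u-X_v$. A hierarchy of $G$ is a rooted tree $\mathcal T$ in which every non-leaf node has at least two children and whose leaves are in bijection with $V$; $V(t)$ is the set of vertices at the leaves of the subtree of $t$; for non-root $t$ with parent $t^*$, $\mathcal O(t)$ is the multiset of edges between $V(t)$ and $V(t^* )\setminus V(t)$. A non-root node $t$ is $\alpha$-bad if $\big(\frac1{|\mathcal O(t)|}\sum_{e\in\mathcal O(t)}\langle U^e,X_e\rangle\big)^2\ge\alpha\cdot\frac1{|\mathcal O(t)|}\sum_{e\in\mathcal O(t)}\|X_e\|_2^2$. A set $F$ of edges is $c$-homogeneous if for all $e,f\in F$: $\langle U^e,X_e\rangle^2/\langle U^f,X_f\rangle^2<c$ and $\|X_e\|_2^2/\|X_f\|_2^2<c$ (all quantities nonzero).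 A set $\mathcal O'(t)\subseteq\mathcal O(t)$ is $\gamma$-dominating if $\big(\sum_{e\in\mathcal O'(t)}\langle U^e,X_e\rangle\big)^2\ge\gamma\big(\sum_{e\in\mathcal O(t)}\langle U^e,X_e\rangle\big)^2$. *)

theory Defs
  imports Complex_Main
begin

text \<open>Graphs: vertex set V, edge identifiers E (parallel edges = distinct identifiers
with equal endpoints); each edge e is oriented src e \<rightarrow> dst e.\<close>

definition graph :: "nat set \<Rightarrow> nat set \<Rightarrow> (nat \<Rightarrow> nat) \<Rightarrow> (nat \<Rightarrow> nat) \<Rightarrow> bool" where
  "graph V E src dst \<longleftrightarrow> finite V \<and> finite E \<and>
     (\<forall>e\<in>E. src e \<in> V \<and> dst e \<in> V \<and> src e \<noteq> dst e)"

definition children :: "nat set \<Rightarrow> nat \<Rightarrow> (nat \<Rightarrow> nat) \<Rightarrow> nat \<Rightarrow> nat set" where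
  "children N r par t = {s \<in> N. s \<noteq> r \<and> par s = t}"

definition hierarchy ::
  "nat set \<Rightarrow> nat set \<Rightarrow> nat \<Rightarrow> (nat \<Rightarrow> nat) \<Rightarrow> (nat \<Rightarrow> nat) \<Rightarrow> bool" where
  "hierarchy V N r par leaf \<longleftrightarrow>
     finite N \<and> r \<in> N \<and> par r = r \<and>
     (\<forall>t\<in>N. par t \<in> N) \<and>
     (\<forall>t\<in>N. \<exists>k. (par ^^ k) t = r) \<and>
     (\<forall>t\<in>N. children N r par t \<noteq> {} \<longrightarrow> card (children N r par t) \<ge> 2) \<and>
     bij_betw leaf V {t \<in> N. children N r par t = {}}"

definition subV :: "nat set \<Rightarrow> (nat \<Rightarrow> nat) \<Rightarrow> (nat \<Rightarrow> nat) \<Rightarrow> nat \<Rightarrow> nat set" where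
  "subV V par leaf t = {v \<in> V. \<exists>k. (par ^^ k) (leaf v) = t}"

definition outE ::
  "nat set \<Rightarrow> nat set \<Rightarrow> (nat \<Rightarrow> nat) \<Rightarrow> (nat \<Rightarrow> nat) \<Rightarrow> (nat \<Rightarrow> nat) \<Rightarrow> (nat \<Rightarrow> nat) \<Rightarrow> nat \<Rightarrow> nat set" where
  "outE V E src dst par leaf t =
     {e \<in> E. (src e \<in> subV V par leaf t \<and> dst e \<in> subV V par leaf (par t) - subV V par leaf t) \<or>
            (dst e \<in> subV V par leaf t \<and> src e \<in> subV V par leaf (par t) - subV V par leaf t)}"

text \<open>U : E x h matrix (U e i), X : h x V matrix (X i v); coordinates i < h.\<close>
definition semiorthogonal :: "nat set \<Rightarrow> nat \<Rightarrow> (nat \<Rightarrow> nat \<Rightarrow> real) \<Rightarrow> bool" where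
  "semiorthogonal E h U \<longleftrightarrow>
     (\<forall>e\<in>E. \<forall>f\<in>E. (\<Sum>i<h. U e i * U f i) = (if e = f then 1 else 0))"

definition Xe :: "(nat \<Rightarrow> nat \<Rightarrow> real) \<Rightarrow> (nat \<Rightarrow> nat) \<Rightarrow> (nat \<Rightarrow> nat) \<Rightarrow> nat \<Rightarrow> nat \<Rightarrow> real" where
  "Xe X src dst e i = X i (src e) - X i (dst e)"

definition ipUX :: "nat \<Rightarrow> (nat \<Rightarrow> nat \<Rightarrow> real) \<Rightarrow> (nat \<Rightarrow> nat \<Rightarrow> real) \<Rightarrow> (nat \<Rightarrow> nat) \<Rightarrow> (nat \<Rightarrow> nat) \<Rightarrow> nat \<Rightarrow> real" where
  "ipUX h U X src dst e = (\<Sum>i<h. U e i * Xe X src dst e i)"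

definition nrmX :: "nat \<Rightarrow> (nat \<Rightarrow> nat \<Rightarrow> real) \<Rightarrow> (nat \<Rightarrow> nat) \<Rightarrow> (nat \<Rightarrow> nat) \<Rightarrow> nat \<Rightarrow> real" where
  "nrmX h X src dst e = (\<Sum>i<h. (Xe X src dst e i)^2)"

definition alpha_bad ::
  "real \<Rightarrow> nat \<Rightarrow> (nat \<Rightarrow> nat \<Rightarrow> real) \<Rightarrow> (nat \<Rightarrow> nat \<Rightarrow> real) \<Rightarrow> (nat \<Rightarrow> nat) \<Rightarrow> (nat \<Rightarrow> nat) \<Rightarrow> nat set \<Rightarrow> bool" where
  "alpha_bad \<alpha> h U X src dst Ot \<longleftrightarrow>
     ((\<Sum>e\<in>Ot. ipUX h U X src dst e) / real (card Ot))^2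
       \<ge> \<alpha> * ((\<Sum>e\<in>Ot. nrmX h X src dst e) / real (card Ot))"

definition homogeneous ::
  "real \<Rightarrow> nat \<Rightarrow> (nat \<Rightarrow> nat \<Rightarrow> real) \<Rightarrow> (nat \<Rightarrow> nat \<Rightarrow> real) \<Rightarrow> (nat \<Rightarrow> nat) \<Rightarrow> (nat \<Rightarrow> nat) \<Rightarrow> nat set \<Rightarrow> bool" where
  "homogeneous c h U X src dst F \<longleftrightarrow>
     (\<forall>e\<in>F. ipUX h U X src dst e \<noteq> 0 \<and> nrmX h X src dst e \<noteq> 0) \<and>
     (\<forall>e\<in>F. \<forall>f\<in>F.
        (ipUX h U X src dst e)^2 / (ipUX h U X src dst f)^2 < c \<and>
        nrmX h X src dst e / nrmX h X src dst f < c)"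

definition dominating ::
  "real \<Rightarrow> nat \<Rightarrow> (nat \<Rightarrow> nat \<Rightarrow> real) \<Rightarrow> (nat \<Rightarrow> nat \<Rightarrow> real) \<Rightarrow> (nat \<Rightarrow> nat) \<Rightarrow> (nat \<Rightarrow> nat) \<Rightarrow> nat set \<Rightarrow> nat set \<Rightarrow> bool" where
  "dominating \<gamma> h U X src dst Ot' Ot \<longleftrightarrow>
     (\<Sum>e\<in>Ot'. ipUX h U X src dst e)^2 \<ge> \<gamma> * (\<Sum>e\<in>Ot. ipUX h U X src dst e)^2"

end

theory Submission
  imports Defs "HOL-Analysis.Convex"
begin

text \<open>Write \<open>p e = \<langle>U\<^sup>e, X\<^sub>e\<rangle>\<close> and \<open>q e = \<parallel>X\<^sub>e\<parallel>\<^sup>2\<close>; semiorthogonality gives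
  \<open>p\<^sup>2 \<le> q\<close> by Cauchy-Schwarz, and after flipping signs the sum \<open>S\<close> of \<open>p\<close> over the \<open>m\<close>
  edges of \<open>O(t)\<close> is positive. With \<open>a = S / m\<close> the average of \<open>p\<close>, badness says that the average of \<open>q\<close> is at most \<open>a\<^sup>2/\<alpha>\<close>.
  Edges with \<open>p < a/4\<close> carry at most \<open>S/4\<close>, and edges with \<open>q > 16a\<^sup>2/\<alpha>\<^sup>2\<close> carry at most
  \<open>\<Sum> \<alpha> q / 4a \<le> S/4\<close> (there \<open>p \<le> \<surd>q \<le> \<alpha> q / 4a\<close>). The remaining edges carry at least
  \<open>S/2\<close>, and on them \<open>16p\<^sup>2/a\<^sup>2\<close> and \<open>16q/a\<^sup>2\<close> lie in \<open>[1, 256/\<alpha>\<^sup>2]\<close>. Sorting these edges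
  into the \<open>n\<^sup>2\<close> cells of dyadic scales of both quantities, with \<open>n = O(log (1/\<alpha>))\<close>, one
  cell is 2-homogeneous and carries at least \<open>S/(2n\<^sup>2)\<close>, so it is \<open>1/(4n\<^sup>4)\<close>-dominating.
  Neither the hierarchy structure nor the 0/1 entries of \<open>X\<close> are needed.\<close>

lemma sq_ipUX_le_nrmX:
  assumes "semiorthogonal E h U" "e \<in> E"
  shows "(ipUX h U X src dst e)\<^sup>2 \<le> nrmX h X src dst e"
proof -
  have "(\<Sum>i<h. (U e i)\<^sup>2) = 1"
    using assms unfolding semiorthogonal_def by (simp add: power2_eq_square)
  then show ?thesis
    unfolding ipUX_def nrmX_def
    using Cauchy_Schwarz_ineq_sum[of "U e" "Xe X src dst e" "{..<h}"] by simp
qed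

definition dyadic_scale :: "real \<Rightarrow> nat" where
  "dyadic_scale x = nat \<lfloor>log 2 x\<rfloor>"

lemma dyadic_scale_less:
  assumes "1 \<le> x" "x < 2 ^ n"
  shows "dyadic_scale x < n"
proof -
  have "log 2 x < n" using assms by (simp add: log_less_iff powr_realpow)
  then show ?thesis using assms by (simp add: dyadic_scale_def nat_less_iff floor_less_iff)
qed

lemma ratio_less_two_if_dyadic_scale_eq:
  assumes "1 \<le> x" "1 \<le> y" "dyadic_scale x = dyadic_scale y"
  shows "x / y < 2"
proof -
  have "\<lfloor>log 2 x\<rfloor> = \<lfloor>log 2 y\<rfloor>"
    using assms by (simp add: dyadic_scale_def eq_nat_nat_iff)
  then have "log 2 x < log 2 y + 1" by linarith
  then have "log 2 (x / y) < 1" using assms by (simp add: log_divide)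
  then show ?thesis using assms by (simp add: log_less_iff)
qed

lemma exists_heavy_fibre:
  fixes p :: "'a \<Rightarrow> real"
  assumes "finite A" "finite I" "I \<noteq> {}" "g ` A \<subseteq> I"
  shows "\<exists>i\<in>I. sum p A \<le> real (card I) * sum p {e \<in> A. g e = i}"
proof -
  define w where "w j = sum p {e \<in> A. g e = j}" for j
  obtain i where i: "i \<in> I" "w i = Max (w ` I)"
    using Max_in[of "w ` I"] assms(2,3) by fastforce
  then have heaviest: "w j \<le> w i" if "j \<in> I" for j
    using that assms(2) by simp
  have "sum p A = (\<Sum>j\<in>I. sum p {e \<in> A. g e = j})"
    using sum.group[OF assms(1,2,4), of p] by simp
  also have "\<dots> \<le> real (card I) * w i"
    using heaviest unfolding w_def by (rule sum_bounded_above)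
  finally show ?thesis using i(1) unfolding w_def by blast
qed

lemma le_quarter_plus_if_atypical:
  fixes a \<alpha> p q :: real
  assumes "0 < a" "0 < \<alpha>" "p\<^sup>2 \<le> q" "\<not> (a / 4 \<le> p \<and> q \<le> 16 * a\<^sup>2 / \<alpha>\<^sup>2)"
  shows "p \<le> a / 4 + \<alpha> * q / (4 * a)"
proof -
  have "0 \<le> q" using assms(3) zero_le_power2 order_trans by blast
  then have "0 \<le> \<alpha> * q / (4 * a)" using assms(1,2) by simp
  moreover have "p \<le> \<alpha> * q / (4 * a)" if "16 * a\<^sup>2 / \<alpha>\<^sup>2 < q"
  proof -
    define b where "b = 4 * a / \<alpha>"
    have "b\<^sup>2 < q" using that assms(2) by (simp add: b_def power_divide)
    moreover have "2 * (b * p) \<le> b\<^sup>2 + p\<^sup>2"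
      using zero_le_power2[of "b - p"] by (simp add: power2_diff)
    ultimately have "b * p \<le> q" using assms(3) by linarith
    then show ?thesis using assms(1,2) by (simp add: b_def field_simps)
  qed
  ultimately show ?thesis using assms(1,4) by linarith
qed

lemma sum_le_twice_sum_typical:
  fixes p q :: "'a \<Rightarrow> real"
  assumes fin: "finite A" and \<alpha>: "0 < \<alpha>"
    and sq_le: "\<And>e. e \<in> A \<Longrightarrow> (p e)\<^sup>2 \<le> q e"
    and pos: "0 < sum p A"
    and bad: "\<alpha> * real (card A) * sum q A \<le> (sum p A)\<^sup>2"
  defines "a \<equiv> sum p A / real (card A)"
  shows "sum p A \<le> 2 * sum p {e \<in> A. a / 4 \<le> p e \<and> q e \<le> 16 * a\<^sup>2 / \<alpha>\<^sup>2}"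
proof -
  define m where "m = real (card A)"
  define M where "M = {e \<in> A. a / 4 \<le> p e \<and> q e \<le> 16 * a\<^sup>2 / \<alpha>\<^sup>2}"
  define g where "g e = a / 4 + \<alpha> * q e / (4 * a)" for e
  have "m > 0" using pos fin by (auto simp: m_def card_gt_0_iff)
  then have "a > 0" and S: "sum p A = a * m" using pos by (simp_all add: a_def m_def)
  have q_nonneg: "0 \<le> q e" if "e \<in> A" for e
    using sq_le[OF that] zero_le_power2 order_trans by blast
  have "\<alpha> * m * sum q A \<le> a * m * (a * m)" using bad S by (simp add: m_def power2_eq_square)
  then have "\<alpha> * sum q A \<le> a * (a * m)" using \<open>m > 0\<close> by (simp add: mult.assoc)
  then have Q: "\<alpha> * sum q A / (4 * a) \<le> a * m / 4" using \<open>a > 0\<close> by (simp add: field_simps)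
  have "sum p (A - M) \<le> sum g (A - M)"
    using le_quarter_plus_if_atypical[OF \<open>a > 0\<close> \<alpha> sq_le] by (intro sum_mono) (auto simp: g_def M_def)
  also have "\<dots> \<le> sum g A"
    using fin q_nonneg \<open>a > 0\<close> \<alpha> by (intro sum_mono2) (auto simp: g_def)
  also have "sum g A = a * m / 4 + \<alpha> * sum q A / (4 * a)"
    by (simp add: g_def sum.distrib m_def sum_distrib_left sum_divide_distrib)
  finally have "sum p (A - M) \<le> sum p A / 2" using Q S by linarith
  moreover have "sum p A = sum p M + sum p (A - M)"
    using sum.subset_diff[of M A p] fin by (auto simp: M_def)
  ultimately show ?thesis by (simp add: M_def)
qed

lemma exists_homogeneous_heavy_subset:
  fixes p q :: "'a \<Rightarrow> real"
  assumes fin: "finite A" and \<alpha>: "0 < \<alpha>"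
    and sq_le: "\<And>e. e \<in> A \<Longrightarrow> (p e)\<^sup>2 \<le> q e"
    and pos: "0 < sum p A"
    and bad: "\<alpha> * real (card A) * sum q A \<le> (sum p A)\<^sup>2"
    and levels: "256 / \<alpha>\<^sup>2 < 2 ^ n"
  shows "\<exists>B\<subseteq>A. (\<forall>e\<in>B. 0 < p e \<and> 0 < q e) \<and>
           (\<forall>e\<in>B. \<forall>f\<in>B. (p e)\<^sup>2 / (p f)\<^sup>2 < 2 \<and> q e / q f < 2) \<and>
           sum p A \<le> 2 * real n ^ 2 * sum p B"
proof -
  define a where "a = sum p A / real (card A)"
  define M where "M = {e \<in> A. a / 4 \<le> p e \<and> q e \<le> 16 * a\<^sup>2 / \<alpha>\<^sup>2}"
  have "card A > 0" using pos fin by (auto simp: card_gt_0_iff)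
  then have "a > 0" using pos by (simp add: a_def)
  have typical: "sum p A \<le> 2 * sum p M"
    using sum_le_twice_sum_typical[OF fin \<alpha> sq_le pos bad] by (simp add: a_def M_def)
  define x where "x e = 16 * (p e)\<^sup>2 / a\<^sup>2" for e
  define y where "y e = 16 * q e / a\<^sup>2" for e
  have range: "1 \<le> x e \<and> x e < 2 ^ n \<and> 1 \<le> y e \<and> y e < 2 ^ n" if "e \<in> M" for e
  proof -
    have e: "e \<in> A" "a / 4 \<le> p e" "q e \<le> 16 * a\<^sup>2 / \<alpha>\<^sup>2" using that by (auto simp: M_def)
    have "(a / 4)\<^sup>2 \<le> (p e)\<^sup>2" using e(2) \<open>a > 0\<close> by (intro power_mono) auto
    then have "1 \<le> x e" using \<open>a > 0\<close> by (simp add: x_def power_divide field_simps)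
    moreover have "x e \<le> y e" using sq_le[OF e(1)] by (simp add: x_def y_def divide_right_mono)
    moreover have "y e \<le> 256 / \<alpha>\<^sup>2"
      using e(3) \<open>a > 0\<close> \<alpha> by (simp add: y_def field_simps)
    ultimately show ?thesis using levels by linarith
  qed
  define cell where "cell e = (dyadic_scale (x e), dyadic_scale (y e))" for e
  have "M \<subseteq> A" by (auto simp: M_def)
  then have "finite M" using fin finite_subset by blast
  have "cell ` M \<subseteq> {..<n} \<times> {..<n}"
    using range by (auto simp: cell_def intro: dyadic_scale_less)
  moreover have "M \<noteq> {}" using typical pos by auto
  ultimately have "{..<n} \<times> {..<n} \<noteq> {}" by blast
  then obtain c where "sum p M \<le> real (card ({..<n} \<times> {..<n})) * sum p {e \<in> M. cell e = c}"
    using exists_heavy_fibre[OF \<open>finite M\<close> _ _ \<open>cell ` M \<subseteq> _\<close>] by blast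
  then have heavy: "sum p A \<le> 2 * real n ^ 2 * sum p {e \<in> M. cell e = c}"
    using typical by (simp add: card_cartesian_product power2_eq_square)
  have positive: "0 < p e \<and> 0 < q e" if "e \<in> M" for e
  proof -
    have "0 < p e" using that \<open>a > 0\<close> by (auto simp: M_def)
    moreover have "(p e)\<^sup>2 \<le> q e" using sq_le that \<open>M \<subseteq> A\<close> by blast
    ultimately show ?thesis by (smt (verit) zero_less_power2)
  qed
  have homogeneous: "(p e)\<^sup>2 / (p f)\<^sup>2 < 2 \<and> q e / q f < 2"
    if "e \<in> M" "f \<in> M" "cell e = cell f" for e f
  proof -
    have "x e / x f < 2" "y e / y f < 2"
      using that range[OF that(1)] range[OF that(2)]
      by (auto simp: cell_def intro: ratio_less_two_if_dyadic_scale_eq)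
    then show ?thesis using \<open>a > 0\<close> by (simp_all add: x_def y_def)
  qed
  show ?thesis
    using \<open>M \<subseteq> A\<close> positive homogeneous heavy
    by (intro exI[of _ "{e \<in> M. cell e = c}"]) auto
qed

lemma exists_homogeneous_dominating_subset:
  fixes p q :: "'a \<Rightarrow> real"
  assumes fin: "finite A" and \<alpha>: "0 < \<alpha>"
    and sq_le: "\<And>e. e \<in> A \<Longrightarrow> (p e)\<^sup>2 \<le> q e"
    and bad: "\<alpha> * (sum q A / real (card A)) \<le> (sum p A / real (card A))\<^sup>2"
    and levels: "256 / \<alpha>\<^sup>2 < 2 ^ n"
  shows "\<exists>B\<subseteq>A. (\<forall>e\<in>B. p e \<noteq> 0 \<and> q e \<noteq> 0) \<and>
           (\<forall>e\<in>B. \<forall>f\<in>B. (p e)\<^sup>2 / (p f)\<^sup>2 < 2 \<and> q e / q f < 2) \<and>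
           (sum p A)\<^sup>2 \<le> 4 * real n ^ 4 * (sum p B)\<^sup>2"
proof (cases "sum p A = 0")
  case True
  then show ?thesis by (intro exI[of _ "{}"]) auto
next
  case False
  then have "card A > 0" using fin by (auto simp: card_gt_0_iff)
  define s where "s = sgn (sum p A)"
  define p' where "p' e = s * p e" for e
  have s2: "s\<^sup>2 = 1" using False by (simp add: s_def sgn_if)
  have sq_p': "(p' e)\<^sup>2 = (p e)\<^sup>2" for e by (simp add: p'_def power_mult_distrib s2)
  have sum_p': "sum p' B = s * sum p B" for B by (simp add: p'_def sum_distrib_left)
  have sq_sum_p': "(sum p' B)\<^sup>2 = (sum p B)\<^sup>2" for B by (simp add: sum_p' power_mult_distrib s2)
  have sq_le': "(p' e)\<^sup>2 \<le> q e" if "e \<in> A" for e using sq_le[OF that] by (simp only: sq_p')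
  have pos': "0 < sum p' A" using False by (simp add: sum_p' s_def sgn_if)
  have bad': "\<alpha> * real (card A) * sum q A \<le> (sum p' A)\<^sup>2"
  proof -
    have "(real (card A))\<^sup>2 * (\<alpha> * (sum q A / real (card A))) \<le> (sum p A)\<^sup>2"
      using mult_left_mono[OF bad, of "(real (card A))\<^sup>2"] \<open>card A > 0\<close>
      by (simp add: power_divide)
    then have "\<alpha> * real (card A) * sum q A \<le> (sum p A)\<^sup>2"
      using \<open>card A > 0\<close> by (simp add: power2_eq_square ac_simps)
    then show ?thesis by (simp only: sq_sum_p')
  qed
  obtain B where B: "B \<subseteq> A" "\<forall>e\<in>B. 0 < p' e \<and> 0 < q e"
      "\<forall>e\<in>B. \<forall>f\<in>B. (p' e)\<^sup>2 / (p' f)\<^sup>2 < 2 \<and> q e / q f < 2"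
      "sum p' A \<le> 2 * real n ^ 2 * sum p' B"
    using exists_homogeneous_heavy_subset[OF fin \<alpha> sq_le' pos' bad' levels] by blast
  have "(sum p' A)\<^sup>2 \<le> (2 * real n ^ 2 * sum p' B)\<^sup>2"
    using B(4) pos' by (intro power_mono) auto
  then have "(sum p A)\<^sup>2 \<le> 4 * real n ^ 4 * (sum p B)\<^sup>2"
    by (simp add: sq_sum_p' power_mult_distrib)
  moreover have "p e \<noteq> 0" if "e \<in> B" for e using B(2) that by (auto simp: p'_def)
  ultimately show ?thesis using B sq_p' by (intro exI[of _ B]) auto
qed

definition dyadic_levels :: "real \<Rightarrow> nat" where
  "dyadic_levels \<alpha> = 2 * nat \<lceil>log 2 (1 / \<alpha>)\<rceil> + 9"

lemma dyadic_levels_power_gt: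
  assumes "0 < \<alpha>"
  shows "256 / \<alpha>\<^sup>2 < 2 ^ dyadic_levels \<alpha>"
proof -
  define c where "c = nat \<lceil>log 2 (1 / \<alpha>)\<rceil>"
  have "1 / \<alpha> = 2 powr log 2 (1 / \<alpha>)" using assms by simp
  also have "\<dots> \<le> 2 powr real c" unfolding c_def by (intro powr_mono real_nat_ceiling_ge) auto
  finally have "1 / \<alpha> \<le> 2 ^ c" by (simp add: powr_realpow)
  then have "(1 / \<alpha>)\<^sup>2 \<le> (2 ^ c)\<^sup>2" using assms by (intro power_mono) auto
  moreover have "(2::real) ^ dyadic_levels \<alpha> = 512 * (2 ^ c)\<^sup>2"
    by (simp add: dyadic_levels_def c_def power_add power_mult[symmetric] mult.commute)
  moreover have "256 / \<alpha>\<^sup>2 < 512 * (1 / \<alpha>)\<^sup>2"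
    using assms by (simp add: power_divide divide_strict_right_mono)
  ultimately show ?thesis by linarith
qed

lemma dyadic_levels_le_ln:
  assumes "0 < \<alpha>" "\<alpha> \<le> 1 / 2"
  shows "real (dyadic_levels \<alpha>) \<le> 13 / ln 2 * ln (1 / \<alpha>)"
proof -
  define l where "l = log 2 (1 / \<alpha>)"
  have "1 \<le> l" using assms by (simp add: l_def le_log_iff field_simps)
  then have "real (dyadic_levels \<alpha>) \<le> 13 * l"
    by (simp add: dyadic_levels_def l_def[symmetric]) linarith
  also have "13 * l = 13 / ln 2 * ln (1 / \<alpha>)" by (simp add: l_def log_def)
  finally show ?thesis .
qed

theorem mainTheorem18:
  shows "\<exists>\<alpha>0 > (0::real). \<exists>C2 :: real \<Rightarrow> real. \<exists>c > (0::real). \<exists>k :: nat.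
    (\<forall>\<alpha>. 0 < \<alpha> \<and> \<alpha> \<le> \<alpha>0 \<longrightarrow> 0 < C2 \<alpha> \<and> C2 \<alpha> \<le> c * (ln (1 / \<alpha>)) ^ k) \<and>
    (\<forall>\<alpha> V E src dst N r par leaf h U X t.
       0 < \<alpha> \<and> \<alpha> \<le> \<alpha>0 \<and>
       graph V E src dst \<and> hierarchy V N r par leaf \<and> 0 < h \<and>
       (\<forall>i<h. \<forall>v\<in>V. X i v \<in> {0, 1}) \<and>
       semiorthogonal E h U \<and>
       t \<in> N \<and> t \<noteq> r \<and>
       alpha_bad \<alpha> h U X src dst (outE V E src dst par leaf t)
       \<longrightarrow> (\<exists>Ot' \<subseteq> outE V E src dst par leaf t.
              homogeneous 2 h U X src dst Ot' \<and>
              dominating (1 / C2 \<alpha>) h U X src dst Ot' (outE V E src dst par leaf t)))"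
proof -
  define C2 where "C2 \<alpha> = 4 * real (dyadic_levels \<alpha>) ^ 4" for \<alpha>
  define c :: real where "c = 4 * (13 / ln 2) ^ 4"
  have C2_bound: "0 < C2 \<alpha> \<and> C2 \<alpha> \<le> c * ln (1 / \<alpha>) ^ 4" if "0 < \<alpha>" "\<alpha> \<le> 1 / 2" for \<alpha>
  proof -
    have "real (dyadic_levels \<alpha>) ^ 4 \<le> (13 / ln 2 * ln (1 / \<alpha>)) ^ 4"
      using dyadic_levels_le_ln[OF that] by (intro power_mono) auto
    also have "\<dots> = (13 / ln 2) ^ 4 * ln (1 / \<alpha>) ^ 4" by (rule power_mult_distrib)
    finally have "C2 \<alpha> \<le> c * ln (1 / \<alpha>) ^ 4" by (simp add: C2_def c_def)
    then show ?thesis by (simp add: C2_def dyadic_levels_def)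
  qed
  have dominating_cell: "\<exists>B \<subseteq> outE V E src dst par leaf t. homogeneous 2 h U X src dst B \<and>
      dominating (1 / C2 \<alpha>) h U X src dst B (outE V E src dst par leaf t)"
    if \<alpha>: "0 < \<alpha>" and G: "graph V E src dst" and U: "semiorthogonal E h U"
      and bad: "alpha_bad \<alpha> h U X src dst (outE V E src dst par leaf t)" for \<alpha> V E src dst par leaf t h U X
  proof -
    define A where "A = outE V E src dst par leaf t"
    have "A \<subseteq> E" by (auto simp: A_def outE_def)
    then have "finite A" using G finite_subset by (auto simp: graph_def)
    then have sq_le: "(ipUX h U X src dst e)\<^sup>2 \<le> nrmX h X src dst e" if "e \<in> A" for e
      using sq_ipUX_le_nrmX[OF U] \<open>A \<subseteq> E\<close> that by blast
    have bad_avg: "\<alpha> * (sum (nrmX h X src dst) A / real (card A))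
        \<le> (sum (ipUX h U X src dst) A / real (card A))\<^sup>2"
      using bad by (simp add: alpha_bad_def A_def)
    obtain B where B: "B \<subseteq> A"
        "\<forall>e\<in>B. ipUX h U X src dst e \<noteq> 0 \<and> nrmX h X src dst e \<noteq> 0"
        "\<forall>e\<in>B. \<forall>f\<in>B. (ipUX h U X src dst e)\<^sup>2 / (ipUX h U X src dst f)\<^sup>2 < 2 \<and>
           nrmX h X src dst e / nrmX h X src dst f < 2"
        "(sum (ipUX h U X src dst) A)\<^sup>2 \<le> C2 \<alpha> * (sum (ipUX h U X src dst) B)\<^sup>2"
      using exists_homogeneous_dominating_subset[OF \<open>finite A\<close> \<alpha> sq_le bad_avg dyadic_levels_power_gt[OF \<alpha>]]
      unfolding C2_def by blast
    have "0 < C2 \<alpha>" by (simp add: C2_def dyadic_levels_def)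
    then have "dominating (1 / C2 \<alpha>) h U X src dst B A"
      using B(4) by (simp add: dominating_def pos_divide_le_eq mult.commute)
    moreover have "homogeneous 2 h U X src dst B" using B(2,3) by (simp add: homogeneous_def)
    ultimately show ?thesis using B(1) by (auto simp: A_def)
  qed
  have "0 < c" by (simp add: c_def)
  then show ?thesis
    by (intro exI[of _ "1 / 2"] exI[of _ C2] exI[of _ c] exI[of _ 4] conjI)
      (simp_all add: C2_bound dominating_cell)
qed

end
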